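(* Let $\mathcal E$ be a centered $\mathcal A$-$\mathcal A$-bimodule and $\sigma^{\rm can}$ its canonical flip. For $(i,j)\in\{(1,2),(1,3),(2,3)\}$ let $P^{\rm can}_{ij}=\frac12(1+\sigma^{\rm can}_{ij})$ on $\mathcal E\otimes_{\mathcal A}\mathcal E\otimes_{\mathcal A}\mathcal E$. Then $P^{\rm can}_{12}|_{\mathrm{Ran}(P^{\rm can}_{23})}:\mathrm{Ran}(P^{\rm can}_{23})\to\mathrm{Ran}(P^{\rm can}_{12})$ and $P^{\rm can}_{23}|_{\mathrm{Ran}(P^{\rm can}_{12})}:\mathrm{Ran}(P^{\rm can}_{12})\to\mathrm{Ran}(P^{\rm can}_{23})$ are bimodule isomorphisms.
   Context: $\mathcal A$ is a complex unital $*$-subalgebra of a $C^*$-algebra. The center of a bimodule is $\mathcal Z(\mathcal E)=\{e\in\mathcal E: ea=ae\ \forall a\in\mathcal A\}$; $\mathcal E$ is centered if the right $\mathcal A$-linear span of $\mathcal Z(\mathcal E)$ is $\mathcal E$. For centered $\mathcal E$, $\sigma^{\rm can}$ is the unique $\mathcal A$-bimodule isomorphism of $\mathcal E\otimes_{\mathcal A}\mathcal E$ with $\sigma^{\rm can}(\omega\otimes\eta)=\eta\otimes\omega$ for $\omega,\eta\in\mathcal Z(\mathcal E)$ (it exists, and $(\sigma^{\rm can})^2=\mathrm{id}$). $\sigma^{\rm can}_{12}=\sigma^{\rm can}\otimes\mathrm{id}$, $\sigma^{\rm can}_{23}=\mathrm{id}\otimes\sigma^{\rm can}$, $\sigma^{\rm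 can}_{13}=\sigma^{\rm can}_{12}\sigma^{\rm can}_{23}\sigma^{\rm can}_{12}$. *)

theory Defs
  imports "HOL-Analysis.Analysis"
begin

definition complex_scaling :: "(complex \<Rightarrow> 'c::real_normed_algebra_1 \<Rightarrow> 'c) \<Rightarrow> bool" where
  "complex_scaling sc \<longleftrightarrow> Vector_Spaces.vector_space sc
     \<and> (\<forall>r a. sc (complex_of_real r) a = r *\<^sub>R a)
     \<and> (\<forall>c a b. sc c (a * b) = sc c a * b \<and> sc c (a * b) = a * sc c b)
     \<and> (\<forall>c a. norm (sc c a) = cmod c * norm a)"

definition cstar_algebra :: "(complex \<Rightarrow> 'c::{real_normed_algebra_1,banach} \<Rightarrow> 'c) \<Rightarrow> ('c \<Rightarrow> 'c) \<Rightarrow> bool" where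
  "cstar_algebra sc st \<longleftrightarrow> complex_scaling sc
     \<and> (\<forall>a b. st (a + b) = st a + st b)
     \<and> (\<forall>c a. st (sc c a) = sc (cnj c) (st a))
     \<and> (\<forall>a b. st (a * b) = st b * st a)
     \<and> (\<forall>a. st (st a) = a)
     \<and> (\<forall>a. norm (st a * a) = (norm a)\<^sup>2)"

definition unital_star_subalgebra :: "(complex \<Rightarrow> 'c::ring_1 \<Rightarrow> 'c) \<Rightarrow> ('c \<Rightarrow> 'c) \<Rightarrow> 'c set \<Rightarrow> bool" where
  "unital_star_subalgebra sc st A \<longleftrightarrow> module.subspace sc A \<and> 1 \<in> A
     \<and> (\<forall>a\<in>A. \<forall>b\<in>A. a * b \<in> A) \<and> (\<forall>a\<in>A. st a \<in> A)"

definition bimodule :: "(complex \<Rightarrow> 'c::ring_1 \<Rightarrow> 'c) \<Rightarrow> 'c set \<Rightarrow> ('c \<Rightarrow> 'e::ab_group_add \<Rightarrow> 'e) \<Rightarrow> ('e \<Rightarrow> 'c \<Rightarrow> 'e) \<Rightarrow> bool" where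
  "bimodule sc A la ra \<longleftrightarrow> (\<forall>a\<in>A. \<forall>b\<in>A. \<forall>x y.
       la a (x + y) = la a x + la a y \<and> la (a + b) x = la a x + la b x
     \<and> la (a * b) x = la a (la b x) \<and> la 1 x = x
     \<and> ra (x + y) a = ra x a + ra y a \<and> ra x (a + b) = ra x a + ra x b
     \<and> ra x (a * b) = ra (ra x a) b \<and> ra x 1 = x
     \<and> la a (ra x b) = ra (la a x) b)
   \<and> (\<forall>c x. la (sc c 1) x = ra x (sc c 1))"

definition bscale :: "(complex \<Rightarrow> 'c::ring_1 \<Rightarrow> 'c) \<Rightarrow> ('c \<Rightarrow> 'e \<Rightarrow> 'e) \<Rightarrow> complex \<Rightarrow> 'e \<Rightarrow> 'e" where
  "bscale sc la c x = la (sc c 1) x"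

definition bimod_center :: "'c set \<Rightarrow> ('c \<Rightarrow> 'e \<Rightarrow> 'e) \<Rightarrow> ('e \<Rightarrow> 'c \<Rightarrow> 'e) \<Rightarrow> 'e set" where
  "bimod_center A la ra = {e. \<forall>a\<in>A. ra e a = la a e}"

definition centered :: "'c set \<Rightarrow> ('c \<Rightarrow> 'e::ab_group_add \<Rightarrow> 'e) \<Rightarrow> ('e \<Rightarrow> 'c \<Rightarrow> 'e) \<Rightarrow> bool" where
  "centered A la ra \<longleftrightarrow> (\<forall>e. \<exists>(n::nat) z a. (\<forall>i<n. z i \<in> bimod_center A la ra \<and> a i \<in> A)
       \<and> e = (\<Sum>i<n. ra (z i) (a i)))"

definition bimod_hom :: "'c set \<Rightarrow> ('c \<Rightarrow> 'e::ab_group_add \<Rightarrow> 'e) \<Rightarrow> ('e \<Rightarrow> 'c \<Rightarrow> 'e)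
    \<Rightarrow> ('c \<Rightarrow> 'f::ab_group_add \<Rightarrow> 'f) \<Rightarrow> ('f \<Rightarrow> 'c \<Rightarrow> 'f) \<Rightarrow> ('e \<Rightarrow> 'f) \<Rightarrow> bool" where
  "bimod_hom A la ra la' ra' f \<longleftrightarrow> (\<forall>x y. f (x + y) = f x + f y)
     \<and> (\<forall>a\<in>A. \<forall>x. f (la a x) = la' a (f x) \<and> f (ra x a) = ra' (f x) a)"

definition bimod_iso_on :: "'c set \<Rightarrow> ('c \<Rightarrow> 'e::ab_group_add \<Rightarrow> 'e) \<Rightarrow> ('e \<Rightarrow> 'c \<Rightarrow> 'e)
    \<Rightarrow> ('c \<Rightarrow> 'f::ab_group_add \<Rightarrow> 'f) \<Rightarrow> ('f \<Rightarrow> 'c \<Rightarrow> 'f) \<Rightarrow> 'e set \<Rightarrow> 'f set \<Rightarrow> ('e \<Rightarrow> 'f) \<Rightarrow> bool" where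
  "bimod_iso_on A la ra la' ra' U V f \<longleftrightarrow> bij_betw f U V
     \<and> (\<forall>x\<in>U. \<forall>y\<in>U. f (x + y) = f x + f y)
     \<and> (\<forall>a\<in>A. \<forall>x\<in>U. f (la a x) = la' a (f x) \<and> f (ra x a) = ra' (f x) a)"

(* (T, tp) is the (algebraic) balanced tensor product M \<otimes>_A N of bimodules, with its
   bimodule structure; universal property w.r.t. A-balanced biadditive maps into \<complex>
   (which for T a complex bimodule characterises M \<otimes>_A N up to isomorphism) *)
definition is_tensor :: "(complex \<Rightarrow> 'c::ring_1 \<Rightarrow> 'c) \<Rightarrow> 'c set
    \<Rightarrow> ('c \<Rightarrow> 'm::ab_group_add \<Rightarrow> 'm) \<Rightarrow> ('m \<Rightarrow> 'c \<Rightarrow> 'm)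
    \<Rightarrow> ('c \<Rightarrow> 'n::ab_group_add \<Rightarrow> 'n) \<Rightarrow> ('n \<Rightarrow> 'c \<Rightarrow> 'n)
    \<Rightarrow> ('c \<Rightarrow> 't::ab_group_add \<Rightarrow> 't) \<Rightarrow> ('t \<Rightarrow> 'c \<Rightarrow> 't) \<Rightarrow> ('m \<Rightarrow> 'n \<Rightarrow> 't) \<Rightarrow> bool" where
  "is_tensor sc A la1 ra1 la2 ra2 laT raT tp \<longleftrightarrow> bimodule sc A laT raT
     \<and> (\<forall>x x' y. tp (x + x') y = tp x y + tp x' y)
     \<and> (\<forall>x y y'. tp x (y + y') = tp x y + tp x y')
     \<and> (\<forall>a\<in>A. \<forall>x y. tp (ra1 x a) y = tp x (la2 a y))
     \<and> (\<forall>a\<in>A. \<forall>x y. laT a (tp x y) = tp (la1 a x) y \<and> raT (tp x y) a = tp x (ra2 y a))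
     \<and> (\<forall>f :: 'm \<Rightarrow> 'n \<Rightarrow> complex.
          ((\<forall>x x' y. f (x + x') y = f x y + f x' y) \<and> (\<forall>x y y'. f x (y + y') = f x y + f x y')
           \<and> (\<forall>a\<in>A. \<forall>x y. f (ra1 x a) y = f x (la2 a y)))
          \<longrightarrow> (\<exists>!g :: 't \<Rightarrow> complex. (\<forall>s t. g (s + t) = g s + g t) \<and> (\<forall>x y. g (tp x y) = f x y)))"

definition half_sum :: "(complex \<Rightarrow> 'c::ring_1 \<Rightarrow> 'c) \<Rightarrow> ('c \<Rightarrow> 'e::ab_group_add \<Rightarrow> 'e) \<Rightarrow> ('e \<Rightarrow> 'e) \<Rightarrow> 'e \<Rightarrow> 'e" where
  "half_sum sc la s x = bscale sc la (1/2) (x + s x)"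

end

theory Submission
  imports Defs
begin

text \<open>
  On the triple tensor product the flips \<open>\<sigma>12\<close> and \<open>\<sigma>23\<close> are involutive bimodule maps
  satisfying the braid relation \<open>\<sigma>12 \<sigma>23 \<sigma>12 = \<sigma>23 \<sigma>12 \<sigma>23\<close>; all three facts only need
  to be checked on elementary tensors of central elements, because \<open>\<E>\<close> is centered and
  additive functionals separate points of a complex vector space. The ranges of the projections
  \<open>P12\<close>, \<open>P23\<close> are the fixed spaces of the flips. If \<open>\<sigma>23 x = x\<close> and \<open>P12 x = 0\<close>, then
  \<open>\<sigma>12 x = -x\<close>, and the braid relation gives \<open>x = -x\<close>, so \<open>x = 0\<close>; a fixed point \<open>y\<close> of
  \<open>\<sigma>12\<close> is \<open>P12 x\<close> for the \<open>\<sigma>23\<close>-fixed vector \<open>x = y + \<sigma>23 y - \<sigma>12 \<sigma>23 y\<close>.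
\<close>

lemma additiveD:
  fixes f :: "'a::ab_group_add \<Rightarrow> 'b::ab_group_add"
  assumes "\<And>x y. f (x + y) = f x + f y"
  shows "f 0 = 0" "f (- x) = - f x" "f (x - y) = f x - f y"
  using additive.zero additive.minus additive.diff additive.intro[OF assms] by auto

lemma vector_space_separating_functional:
  fixes s :: "complex \<Rightarrow> 'v::ab_group_add \<Rightarrow> 'v"
  assumes "vector_space s" and "v \<noteq> 0"
  obtains g :: "'v \<Rightarrow> complex" where "\<And>x y. g (x + y) = g x + g y" and "g v \<noteq> 0"
proof -
  interpret vp: vector_space_pair s "(*)"
    unfolding vector_space_pair_def using assms(1)
    by (auto simp: vector_space_def algebra_simps)
  have "vp.vs1.independent {v}"
    using assms(2) vp.vs1.dependent_single by blast
  from vp.linear_independent_extend[OF this, of "\<lambda>_. 1"]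
  obtain g where "Vector_Spaces.linear s (*) g" "g v = 1" by auto
  then show ?thesis
    by (intro that[of g]) (auto simp: Vector_Spaces.linear_iff)
qed

lemma cstar_algebra_scalars:
  assumes "cstar_algebra sc st"
  shows "vector_space sc" "sc 1 1 = 1" "sc a 1 + sc b 1 = sc (a + b) 1"
    "sc a 1 * sc b 1 = sc (a * b) 1" "sc c 1 * x = x * sc c 1"
proof -
  have cs: "complex_scaling sc"
    using assms cstar_algebra_def by blast
  show vs: "vector_space sc"
    using cs complex_scaling_def by blast
  have "sc (complex_of_real 1) 1 = 1 *\<^sub>R 1"
    using cs complex_scaling_def by blast
  then show "sc 1 1 = 1" by simp
  show "sc a 1 + sc b 1 = sc (a + b) 1"
    using vs unfolding vector_space_def by simp
  have mult: "sc c (x * y) = sc c x * y" "sc c (x * y) = x * sc c y" for c x y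
    using cs complex_scaling_def by blast+
  show "sc a 1 * sc b 1 = sc (a * b) 1"
    using mult(1)[of a 1 "sc b 1"] vs unfolding vector_space_def by simp
  show "sc c 1 * x = x * sc c 1"
    using mult(1)[of c 1 x] mult(2)[of c x 1] by simp
qed

lemma unital_star_subalgebraD:
  assumes "unital_star_subalgebra sc st A"
  shows "1 \<in> A" "a \<in> A \<Longrightarrow> b \<in> A \<Longrightarrow> a * b \<in> A"
  using assms unfolding unital_star_subalgebra_def by auto

lemma unital_star_subalgebra_scalar:
  assumes "cstar_algebra sc st" "unital_star_subalgebra sc st A"
  shows "sc c 1 \<in> A"
proof -
  have "module sc"
    using cstar_algebra_scalars(1)[OF assms(1)] module_iff_vector_space by blast
  then show ?thesis
    using assms(2) unfolding unital_star_subalgebra_def module.subspace_def[OF \<open>module sc\<close>]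
    by blast
qed

lemma bimoduleD:
  assumes "bimodule sc A la ra" "a \<in> A" "b \<in> A"
  shows "la a (x + y) = la a x + la a y" "la (a + b) x = la a x + la b x"
    "la (a * b) x = la a (la b x)" "la 1 x = x"
    "ra (x + y) a = ra x a + ra y a" "ra x (a + b) = ra x a + ra x b"
    "ra x (a * b) = ra (ra x a) b" "ra x 1 = x"
    "la a (ra x b) = ra (la a x) b"
  using assms unfolding bimodule_def by blast+

lemma bimodule_diff:
  assumes "bimodule sc A la ra" "a \<in> A"
  shows "la a (x - y) = la a x - la a y" "ra (x - y) a = ra x a - ra y a"
  using additiveD(3)[of "la a", OF bimoduleD(1)[OF assms(1,2,2)]]
    additiveD(3)[of "\<lambda>x. ra x a", OF bimoduleD(5)[OF assms(1,2,2)]]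
  by simp_all

lemma bimodule_vector_space:
  assumes "cstar_algebra sc st" "unital_star_subalgebra sc st A" "bimodule sc A la ra"
  shows "vector_space (bscale sc la)"
proof -
  note S = cstar_algebra_scalars[OF assms(1)]
  note SA = unital_star_subalgebra_scalar[OF assms(1,2)]
  show ?thesis
    unfolding vector_space_def bscale_def
  proof (intro allI conjI)
    fix a b :: complex and x y
    show "la (sc a 1) (x + y) = la (sc a 1) x + la (sc a 1) y"
      using bimoduleD(1)[OF assms(3) SA SA] .
    show "la (sc (a + b) 1) x = la (sc a 1) x + la (sc b 1) x"
      using bimoduleD(2)[OF assms(3) SA SA] S(3) by metis
    show "la (sc a 1) (la (sc b 1) x) = la (sc (a * b) 1) x"
      using bimoduleD(3)[OF assms(3) SA SA] S(4) by metis
    show "la (sc 1 1) x = x"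
      using bimoduleD(4)[OF assms(3) SA SA] S(2) by simp
  qed
qed

lemma braided_involutions_half_sum_bij_betw:
  fixes h s1 s2 :: "'t::ab_group_add \<Rightarrow> 't"
  assumes h_add: "\<And>x y. h (x + y) = h x + h y"
    and s1_add: "\<And>x y. s1 (x + y) = s1 x + s1 y"
    and s2_add: "\<And>x y. s2 (x + y) = s2 x + s2 y"
    and h_half: "\<And>v. h v + h v = v"
    and s1_s1: "\<And>v. s1 (s1 v) = v" and s2_s2: "\<And>v. s2 (s2 v) = v"
    and braid: "\<And>v. s1 (s2 (s1 v)) = s2 (s1 (s2 v))"
    and h_s1: "\<And>v. h (s1 v) = s1 (h v)" and h_s2: "\<And>v. h (s2 v) = s2 (h v)"
  shows "bij_betw (\<lambda>x. h (x + s1 x)) (range (\<lambda>x. h (x + s2 x))) (range (\<lambda>x. h (x + s1 x)))"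
proof -
  note S1 = additiveD[of s1, OF s1_add] and S2 = additiveD[of s2, OF s2_add]
  have h_double: "h (v + v) = v" for v
    using h_add h_half by metis
  have fixed1: "s1 (h (u + s1 u)) = h (u + s1 u)" for u
    by (simp add: h_s1[symmetric] s1_add s1_s1 add.commute)
  have fixed2: "s2 (h (u + s2 u)) = h (u + s2 u)" for u
    by (simp add: h_s2[symmetric] s2_add s2_s2 add.commute)
  have inj: "inj_on (\<lambda>x. h (x + s1 x)) (range (\<lambda>x. h (x + s2 x)))"
  proof (rule inj_onI)
    fix x y
    assume "x \<in> range (\<lambda>x. h (x + s2 x))" "y \<in> range (\<lambda>x. h (x + s2 x))"
      and eq: "h (x + s1 x) = h (y + s1 y)"
    then have "s2 x = x" "s2 y = y"
      using fixed2 by auto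
    define d where "d = x - y"
    have s2d: "s2 d = d"
      using \<open>s2 x = x\<close> \<open>s2 y = y\<close> S2(3) by (simp add: d_def)
    have "x + s1 x = y + s1 y"
      using eq h_half by metis
    then have s1d: "s1 d = - d"
      by (simp add: d_def S1(3) algebra_simps)
    have "s1 (s2 (s1 d)) = d" "s2 (s1 (s2 d)) = - d"
      using s1d s2d S1(2) S2(2) by simp_all
    then have "d + d = 0"
      using braid[of d] by (metis add.right_inverse minus_minus)
    then have "d = 0"
      using h_double additiveD(1)[OF h_add] by metis
    then show "x = y"
      by (simp add: d_def)
  qed
  have surj: "range (\<lambda>x. h (x + s1 x)) \<subseteq> (\<lambda>x. h (x + s1 x)) ` range (\<lambda>x. h (x + s2 x))"
  proof
    fix y
    assume "y \<in> range (\<lambda>x. h (x + s1 x))"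
    then have s1y: "s1 y = y"
      using fixed1 by auto
    define x where "x = y + s2 y - s1 (s2 y)"
    have "s2 (s1 (s2 y)) = s1 (s2 y)"
      using braid[of y] s1y by simp
    then have "s2 x = x"
      by (simp add: x_def S2(3) s2_add s2_s2 algebra_simps)
    then have "x = h (x + s2 x)"
      using h_double by simp
    moreover have "s1 x = y + s1 (s2 y) - s2 y"
      by (simp add: x_def S1(3) s1_add s1_s1 s1y)
    then have "y = h (x + s1 x)"
      using h_double by (simp add: x_def algebra_simps)
    ultimately show "y \<in> (\<lambda>x. h (x + s1 x)) ` range (\<lambda>x. h (x + s2 x))"
      by blast
  qed
  show ?thesis
    unfolding bij_betw_def using inj surj by blast
qed

lemma half_sum_bimod_iso_on:
  assumes cstar: "cstar_algebra sc st" and subalg: "unital_star_subalgebra sc st A"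
    and bimod: "bimodule sc A la ra"
    and hom1: "bimod_hom A la ra la ra s1" and hom2: "bimod_hom A la ra la ra s2"
    and s1_s1: "\<And>v. s1 (s1 v) = v" and s2_s2: "\<And>v. s2 (s2 v) = v"
    and braid: "\<And>v. s1 (s2 (s1 v)) = s2 (s1 (s2 v))"
  shows "bimod_iso_on A la ra la ra (range (half_sum sc la s2)) (range (half_sum sc la s1))
           (half_sum sc la s1)"
proof -
  define h where "h = la (sc (1/2) 1)"
  have half_in_A: "sc (1/2) 1 \<in> A"
    by (rule unital_star_subalgebra_scalar[OF cstar subalg])
  note B = bimoduleD[OF bimod]
  have one_in_A: "1 \<in> A"
    by (rule unital_star_subalgebraD(1)[OF subalg])
  have h_add: "h (x + y) = h x + h y" for x y
    unfolding h_def using B(1)[OF half_in_A half_in_A] .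
  have h_half: "h v + h v = v" for v
    using B(2)[OF half_in_A half_in_A, where x=v] B(4)[OF one_in_A one_in_A, where x=v]
      cstar_algebra_scalars(2)[OF cstar] cstar_algebra_scalars(3)[OF cstar, of "1/2" "1/2"]
    by (simp add: h_def)
  have h_la: "h (la a x) = la a (h x)" if "a \<in> A" for a x
    using B(3)[OF half_in_A that] B(3)[OF that half_in_A] cstar_algebra_scalars(5)[OF cstar]
    by (simp add: h_def)
  have h_ra: "h (ra x a) = ra (h x) a" if "a \<in> A" for a x
    using B(9)[OF half_in_A that] by (simp add: h_def)
  have hom_add: "s (x + y) = s x + s y"
    and hom_la: "a \<in> A \<Longrightarrow> s (la a x) = la a (s x)"
    and hom_ra: "a \<in> A \<Longrightarrow> s (ra x a) = ra (s x) a"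
    if "bimod_hom A la ra la ra s" for s a x y
    using that unfolding bimod_hom_def by blast+
  have h_s1: "h (s1 v) = s1 (h v)" and h_s2: "h (s2 v) = s2 (h v)" for v
    unfolding h_def using hom_la[OF hom1 half_in_A] hom_la[OF hom2 half_in_A] by simp_all
  have half_sum: "half_sum sc la s1 = (\<lambda>x. h (x + s1 x))" "half_sum sc la s2 = (\<lambda>x. h (x + s2 x))"
    by (simp_all add: fun_eq_iff half_sum_def bscale_def h_def)
  have "bij_betw (\<lambda>x. h (x + s1 x)) (range (\<lambda>x. h (x + s2 x))) (range (\<lambda>x. h (x + s1 x)))"
    by (rule braided_involutions_half_sum_bij_betw
        [OF h_add hom_add[OF hom1] hom_add[OF hom2] h_half s1_s1 s2_s2 braid h_s1 h_s2])
  then show ?thesis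
    unfolding bimod_iso_on_def half_sum
    using h_add hom_add[OF hom1] B(1,5) h_la h_ra hom_la[OF hom1] hom_ra[OF hom1]
    by (simp add: algebra_simps)
qed

lemma tensorD:
  assumes "is_tensor sc A la1 ra1 la2 ra2 laT raT tp"
  shows "bimodule sc A laT raT" "tp (x + x') y = tp x y + tp x' y" "tp x (y + y') = tp x y + tp x y'"
    "a \<in> A \<Longrightarrow> tp (ra1 x a) y = tp x (la2 a y)"
    "a \<in> A \<Longrightarrow> laT a (tp x y) = tp (la1 a x) y"
    "a \<in> A \<Longrightarrow> raT (tp x y) a = tp x (ra2 y a)"
  using assms by (simp_all add: is_tensor_def)

lemma tensor_additive_eq_0:
  fixes tp :: "'m::ab_group_add \<Rightarrow> 'n::ab_group_add \<Rightarrow> 't::ab_group_add"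
    and s :: "complex \<Rightarrow> 'u::ab_group_add \<Rightarrow> 'u" and F :: "'t \<Rightarrow> 'u"
  assumes tens: "is_tensor sc A la1 ra1 la2 ra2 laT raT tp"
    and "vector_space s"
    and F_add: "\<And>x y. F (x + y) = F x + F y"
    and F_tp: "\<And>x y. F (tp x y) = 0"
  shows "F w = 0"
proof (rule ccontr)
  assume "F w \<noteq> 0"
  then obtain g :: "'u \<Rightarrow> complex" where g_add: "\<And>x y. g (x + y) = g x + g y" and "g (F w) \<noteq> 0"
    using vector_space_separating_functional[OF \<open>vector_space s\<close>] by metis
  let ?extends_zero = "\<lambda>g' :: 't \<Rightarrow> complex. (\<forall>s t. g' (s + t) = g' s + g' t) \<and> (\<forall>x y. g' (tp x y) = 0)"
  have "\<exists>!g'. ?extends_zero g'"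
    using tens unfolding is_tensor_def
    by (elim conjE) (drule spec[of _ "\<lambda>_ _. 0"], simp)
  moreover have "?extends_zero (g \<circ> F)" "?extends_zero (\<lambda>_. 0)"
    using F_add F_tp g_add additiveD(1)[OF g_add] by simp_all
  ultimately have "g \<circ> F = (\<lambda>_. 0)"
    by (elim ex1E) (metis (no_types, lifting))
  then show False
    using \<open>g (F w) \<noteq> 0\<close> by (metis comp_apply)
qed

lemma centered_additive_eq_0:
  fixes phi :: "'e::ab_group_add \<Rightarrow> 'g::ab_group_add"
  assumes "centered A la ra"
    and phi_add: "\<And>x y. phi (x + y) = phi x + phi y"
    and phi_center: "\<And>z a. z \<in> bimod_center A la ra \<Longrightarrow> a \<in> A \<Longrightarrow> phi (ra z a) = 0"
  shows "phi x = 0"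
proof -
  obtain n :: nat and z a where za: "\<forall>i<n. z i \<in> bimod_center A la ra \<and> a i \<in> A"
    and x: "x = (\<Sum>i<n. ra (z i) (a i))"
    using assms(1) unfolding centered_def by blast
  have "phi (\<Sum>i<m. ra (z i) (a i)) = 0" if "m \<le> n" for m
    using that by (induction m) (simp_all add: additiveD(1)[OF phi_add] phi_add phi_center za)
  then show ?thesis
    using x by simp
qed

lemma tensor_center_ra:
  assumes tens: "is_tensor sc A la ra la ra laT raT tp"
    and subalg: "unital_star_subalgebra sc st A" and bimod: "bimodule sc A la ra"
    and z: "z \<in> bimod_center A la ra" and w: "w \<in> bimod_center A la ra"
    and a: "a \<in> A" and b: "b \<in> A"
  shows "tp (ra z a) (ra w b) = raT (tp z w) (a * b)"
proof -
  have "tp (ra z a) (ra w b) = tp z (la a (ra w b))"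
    using tensorD(4)[OF tens a] .
  also have "\<dots> = tp z (ra (ra w a) b)"
    using bimoduleD(9)[OF bimod a b] w a by (simp add: bimod_center_def)
  also have "\<dots> = raT (tp z w) (a * b)"
    using bimoduleD(7)[OF bimod a b] tensorD(6)[OF tens unital_star_subalgebraD(2)[OF subalg a b]]
    by simp
  finally show ?thesis .
qed

locale centered_tensor_cube =
  fixes sc :: "complex \<Rightarrow> 'c::{real_normed_algebra_1,banach} \<Rightarrow> 'c"
    and st :: "'c \<Rightarrow> 'c"
    and A :: "'c set"
    and la :: "'c \<Rightarrow> 'e::ab_group_add \<Rightarrow> 'e" and ra :: "'e \<Rightarrow> 'c \<Rightarrow> 'e"
    and la2 :: "'c \<Rightarrow> 't2::ab_group_add \<Rightarrow> 't2" and ra2 :: "'t2 \<Rightarrow> 'c \<Rightarrow> 't2"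
    and tp :: "'e \<Rightarrow> 'e \<Rightarrow> 't2"
    and la3 :: "'c \<Rightarrow> 't3::ab_group_add \<Rightarrow> 't3" and ra3 :: "'t3 \<Rightarrow> 'c \<Rightarrow> 't3"
    and tpL :: "'t2 \<Rightarrow> 'e \<Rightarrow> 't3"
  assumes cstar: "cstar_algebra sc st"
    and subalg: "unital_star_subalgebra sc st A"
    and bimodE: "bimodule sc A la ra"
    and cent: "centered A la ra"
    and tens2: "is_tensor sc A la ra la ra la2 ra2 tp"
    and tens3L: "is_tensor sc A la2 ra2 la ra la3 ra3 tpL"
begin

lemma tensor2_eq_0_on_center:
  fixes D :: "'t2 \<Rightarrow> 'u::ab_group_add"
  assumes bimodU: "bimodule sc A laU raU"
    and D_add: "\<And>x y. D (x + y) = D x + D y"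
    and D_ra: "\<And>t a. a \<in> A \<Longrightarrow> D (ra2 t a) = raU (D t) a"
    and D_center: "\<And>z w. z \<in> bimod_center A la ra \<Longrightarrow> w \<in> bimod_center A la ra \<Longrightarrow> D (tp z w) = 0"
  shows "D t = 0"
proof (rule tensor_additive_eq_0[OF tens2 bimodule_vector_space[OF cstar subalg bimodU] D_add])
  fix x y
  show "D (tp x y) = 0"
  proof (rule centered_additive_eq_0[OF cent, of "\<lambda>x. D (tp x y)"])
    show "D (tp (x + x') y) = D (tp x y) + D (tp x' y)" for x x'
      by (simp add: tensorD(2)[OF tens2] D_add)
    fix z a
    assume z: "z \<in> bimod_center A la ra" and a: "a \<in> A"
    show "D (tp (ra z a) y) = 0"
    proof (rule centered_additive_eq_0[OF cent, of "\<lambda>y. D (tp (ra z a) y)"])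
      show "D (tp (ra z a) (y + y')) = D (tp (ra z a) y) + D (tp (ra z a) y')" for y y'
        by (simp add: tensorD(3)[OF tens2] D_add)
      fix w b
      assume w: "w \<in> bimod_center A la ra" and b: "b \<in> A"
      have ab: "a * b \<in> A"
        using unital_star_subalgebraD(2)[OF subalg a b] .
      show "D (tp (ra z a) (ra w b)) = 0"
        using tensor_center_ra[OF tens2 subalg bimodE z w a b] D_ra[OF ab] D_center[OF z w]
          additiveD(1)[OF bimoduleD(5)[OF bimodU ab ab]]
        by simp
    qed
  qed
qed

lemma tensor3_eq_0_on_center:
  fixes D :: "'t3 \<Rightarrow> 'u::ab_group_add"
  assumes bimodU: "bimodule sc A laU raU"
    and D_add: "\<And>x y. D (x + y) = D x + D y"
    and D_ra: "\<And>t a. a \<in> A \<Longrightarrow> D (ra3 t a) = raU (D t) a"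
    and D_center: "\<And>z1 z2 z3. z1 \<in> bimod_center A la ra \<Longrightarrow> z2 \<in> bimod_center A la ra
                     \<Longrightarrow> z3 \<in> bimod_center A la ra \<Longrightarrow> D (tpL (tp z1 z2) z3) = 0"
  shows "D u = 0"
proof (rule tensor_additive_eq_0[OF tens3L bimodule_vector_space[OF cstar subalg bimodU] D_add])
  have D_center_right: "D (tpL t z) = 0" if z: "z \<in> bimod_center A la ra" for t z
  proof (rule tensor2_eq_0_on_center[OF bimodU, of "\<lambda>t. D (tpL t z)"])
    show "D (tpL (x + y) z) = D (tpL x z) + D (tpL y z)" for x y
      by (simp add: tensorD(2)[OF tens3L] D_add)
    show "D (tpL (ra2 t a) z) = raU (D (tpL t z)) a" if a: "a \<in> A" for t a
    proof -
      have "tpL (ra2 t a) z = ra3 (tpL t z) a"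
        using tensorD(4,6)[OF tens3L a] z a by (simp add: bimod_center_def)
      then show ?thesis
        using D_ra[OF a] by simp
    qed
    show "D (tpL (tp z1 z2) z) = 0"
      if "z1 \<in> bimod_center A la ra" "z2 \<in> bimod_center A la ra" for z1 z2
      using D_center[OF that z] .
  qed
  fix t z
  show "D (tpL t z) = 0"
  proof (rule centered_additive_eq_0[OF cent, of "\<lambda>z. D (tpL t z)"])
    show "D (tpL t (x + y)) = D (tpL t x) + D (tpL t y)" for x y
      by (simp add: tensorD(3)[OF tens3L] D_add)
    show "D (tpL t (ra z a)) = 0" if "z \<in> bimod_center A la ra" "a \<in> A" for z a
      using tensorD(6)[OF tens3L \<open>a \<in> A\<close>] D_ra[OF \<open>a \<in> A\<close>] D_center_right[OF that(1)]
        additiveD(1)[OF bimoduleD(5)[OF bimodU \<open>a \<in> A\<close> \<open>a \<in> A\<close>]]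
      by metis
  qed
qed

end

text \<open>The theorem also assumes that \<open>\<sigma>\<close> is bijective.\<close>

locale canonical_flip = centered_tensor_cube +
  fixes tpR :: "'e::ab_group_add \<Rightarrow> 't2::ab_group_add \<Rightarrow> 't3::ab_group_add"
    and \<sigma> :: "'t2 \<Rightarrow> 't2" and \<sigma>12 :: "'t3 \<Rightarrow> 't3" and \<sigma>23 :: "'t3 \<Rightarrow> 't3"
  assumes tens3R: "is_tensor sc A la ra la2 ra2 la3 ra3 tpR"
    and assoc: "\<And>x y z. tpL (tp x y) z = tpR x (tp y z)"
    and sigma_hom: "bimod_hom A la2 ra2 la2 ra2 \<sigma>"
    and sigma_flip: "\<And>\<omega> \<eta>. \<omega> \<in> bimod_center A la ra \<Longrightarrow> \<eta> \<in> bimod_center A la ra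
                        \<Longrightarrow> \<sigma> (tp \<omega> \<eta>) = tp \<eta> \<omega>"
    and s12_add: "\<And>u v. \<sigma>12 (u + v) = \<sigma>12 u + \<sigma>12 v"
    and s12_def: "\<And>t z. \<sigma>12 (tpL t z) = tpL (\<sigma> t) z"
    and s23_add: "\<And>u v. \<sigma>23 (u + v) = \<sigma>23 u + \<sigma>23 v"
    and s23_def: "\<And>x t. \<sigma>23 (tpR x t) = tpR x (\<sigma> t)"
begin

lemma sigma_add: "\<sigma> (x + y) = \<sigma> x + \<sigma> y"
  and sigma_la: "a \<in> A \<Longrightarrow> \<sigma> (la2 a t) = la2 a (\<sigma> t)"
  and sigma_ra: "a \<in> A \<Longrightarrow> \<sigma> (ra2 t a) = ra2 (\<sigma> t) a"
  using sigma_hom unfolding bimod_hom_def by blast+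

lemma bimodule3: "bimodule sc A la3 ra3"
  by (rule tensorD(1)[OF tens3L])

lemma sigma_involutive: "\<sigma> (\<sigma> t) = t"
proof -
  have "\<sigma> (\<sigma> t) - t = 0"
  proof (rule tensor2_eq_0_on_center[OF tensorD(1)[OF tens2], of "\<lambda>t. \<sigma> (\<sigma> t) - t"])
    show "\<sigma> (\<sigma> (x + y)) - (x + y) = (\<sigma> (\<sigma> x) - x) + (\<sigma> (\<sigma> y) - y)" for x y
      by (simp add: sigma_add)
    show "\<sigma> (\<sigma> (ra2 t a)) - ra2 t a = ra2 (\<sigma> (\<sigma> t) - t) a" if "a \<in> A" for t a
      using that by (simp add: sigma_ra bimodule_diff(2)[OF tensorD(1)[OF tens2]])
  qed (simp add: sigma_flip)
  then show ?thesis
    by simp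
qed

lemma sigma12_bimod_hom: "bimod_hom A la3 ra3 la3 ra3 \<sigma>12"
  unfolding bimod_hom_def
proof (intro conjI ballI allI)
  fix a u
  assume a: "a \<in> A"
  have "\<sigma>12 (la3 a u) - la3 a (\<sigma>12 u) = 0"
    by (rule tensor_additive_eq_0[OF tens3L bimodule_vector_space[OF cstar subalg bimodule3]])
      (simp_all add: s12_add bimoduleD(1)[OF bimodule3 a a] tensorD(5)[OF tens3L a] s12_def sigma_la[OF a])
  then show "\<sigma>12 (la3 a u) = la3 a (\<sigma>12 u)"
    by simp
  have "\<sigma>12 (ra3 u a) - ra3 (\<sigma>12 u) a = 0"
    by (rule tensor_additive_eq_0[OF tens3L bimodule_vector_space[OF cstar subalg bimodule3]])
      (simp_all add: s12_add bimoduleD(5)[OF bimodule3 a a] tensorD(6)[OF tens3L a] s12_def)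
  then show "\<sigma>12 (ra3 u a) = ra3 (\<sigma>12 u) a"
    by simp
qed (rule s12_add)

lemma sigma23_bimod_hom: "bimod_hom A la3 ra3 la3 ra3 \<sigma>23"
  unfolding bimod_hom_def
proof (intro conjI ballI allI)
  fix a u
  assume a: "a \<in> A"
  have "\<sigma>23 (la3 a u) - la3 a (\<sigma>23 u) = 0"
    by (rule tensor_additive_eq_0[OF tens3R bimodule_vector_space[OF cstar subalg bimodule3]])
      (simp_all add: s23_add bimoduleD(1)[OF bimodule3 a a] tensorD(5)[OF tens3R a] s23_def)
  then show "\<sigma>23 (la3 a u) = la3 a (\<sigma>23 u)"
    by simp
  have "\<sigma>23 (ra3 u a) - ra3 (\<sigma>23 u) a = 0"
    by (rule tensor_additive_eq_0[OF tens3R bimodule_vector_space[OF cstar subalg bimodule3]])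
      (simp_all add: s23_add bimoduleD(5)[OF bimodule3 a a] tensorD(6)[OF tens3R a] s23_def sigma_ra[OF a])
  then show "\<sigma>23 (ra3 u a) = ra3 (\<sigma>23 u) a"
    by simp
qed (rule s23_add)

lemma sigma12_involutive: "\<sigma>12 (\<sigma>12 u) = u"
  using tensor_additive_eq_0[OF tens3L bimodule_vector_space[OF cstar subalg bimodule3],
      of "\<lambda>u. \<sigma>12 (\<sigma>12 u) - u"]
  by (simp add: s12_add s12_def sigma_involutive)

lemma sigma23_involutive: "\<sigma>23 (\<sigma>23 u) = u"
  using tensor_additive_eq_0[OF tens3R bimodule_vector_space[OF cstar subalg bimodule3],
      of "\<lambda>u. \<sigma>23 (\<sigma>23 u) - u"]
  by (simp add: s23_add s23_def sigma_involutive)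

lemma sigma23_tpL:
  assumes "y \<in> bimod_center A la ra" "z \<in> bimod_center A la ra"
  shows "\<sigma>23 (tpL (tp x y) z) = tpL (tp x z) y"
  using assms by (simp add: assoc s23_def sigma_flip)

lemma sigma_braid: "\<sigma>12 (\<sigma>23 (\<sigma>12 u)) = \<sigma>23 (\<sigma>12 (\<sigma>23 u))"
proof -
  define D where "D u = \<sigma>12 (\<sigma>23 (\<sigma>12 u)) - \<sigma>23 (\<sigma>12 (\<sigma>23 u))" for u
  have "D u = 0"
  proof (rule tensor3_eq_0_on_center[OF bimodule3, where D=D])
    show "D (x + y) = D x + D y" for x y
      by (simp add: D_def s12_add s23_add)
    show "D (ra3 t a) = ra3 (D t) a" if "a \<in> A" for t a
      using sigma12_bimod_hom sigma23_bimod_hom that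
      by (simp add: D_def bimod_hom_def bimodule_diff(2)[OF bimodule3])
    show "D (tpL (tp z1 z2) z3) = 0"
      if "z1 \<in> bimod_center A la ra" "z2 \<in> bimod_center A la ra" "z3 \<in> bimod_center A la ra"
      for z1 z2 z3
      using that by (simp add: D_def s12_def sigma_flip sigma23_tpL)
  qed
  then show ?thesis
    by (simp add: D_def)
qed

lemma half_sum_sigma12_iso:
  "bimod_iso_on A la3 ra3 la3 ra3 (range (half_sum sc la3 \<sigma>23)) (range (half_sum sc la3 \<sigma>12))
     (half_sum sc la3 \<sigma>12)"
  by (rule half_sum_bimod_iso_on[OF cstar subalg bimodule3 sigma12_bimod_hom sigma23_bimod_hom
        sigma12_involutive sigma23_involutive sigma_braid])

lemma half_sum_sigma23_iso:
  "bimod_iso_on A la3 ra3 la3 ra3 (range (half_sum sc la3 \<sigma>12)) (range (half_sum sc la3 \<sigma>23))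
     (half_sum sc la3 \<sigma>23)"
  by (rule half_sum_bimod_iso_on[OF cstar subalg bimodule3 sigma23_bimod_hom sigma12_bimod_hom
        sigma23_involutive sigma12_involutive sigma_braid[symmetric]])

end

theorem lemma3p6:
  fixes sc :: "complex \<Rightarrow> 'c::{real_normed_algebra_1,banach} \<Rightarrow> 'c"
    and st :: "'c \<Rightarrow> 'c"
    and A :: "'c set"
    and la :: "'c \<Rightarrow> 'e::ab_group_add \<Rightarrow> 'e" and ra :: "'e \<Rightarrow> 'c \<Rightarrow> 'e"
    and la2 :: "'c \<Rightarrow> 't2::ab_group_add \<Rightarrow> 't2" and ra2 :: "'t2 \<Rightarrow> 'c \<Rightarrow> 't2"
    and tp :: "'e \<Rightarrow> 'e \<Rightarrow> 't2"
    and la3 :: "'c \<Rightarrow> 't3::ab_group_add \<Rightarrow> 't3" and ra3 :: "'t3 \<Rightarrow> 'c \<Rightarrow> 't3"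
    and tpL :: "'t2 \<Rightarrow> 'e \<Rightarrow> 't3" and tpR :: "'e \<Rightarrow> 't2 \<Rightarrow> 't3"
    and \<sigma> :: "'t2 \<Rightarrow> 't2" and \<sigma>12 :: "'t3 \<Rightarrow> 't3" and \<sigma>23 :: "'t3 \<Rightarrow> 't3"
  assumes cstar: "cstar_algebra sc st"
    and subalg: "unital_star_subalgebra sc st A"
    and bimodE: "bimodule sc A la ra"
    and cent: "centered A la ra"
    and tens2: "is_tensor sc A la ra la ra la2 ra2 tp"
    and tens3L: "is_tensor sc A la2 ra2 la ra la3 ra3 tpL"
    and tens3R: "is_tensor sc A la ra la2 ra2 la3 ra3 tpR"
    and assoc: "\<And>x y z. tpL (tp x y) z = tpR x (tp y z)"
    and sigma_hom: "bimod_hom A la2 ra2 la2 ra2 \<sigma>"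
    and sigma_bij: "bij \<sigma>"
    and sigma_flip: "\<And>\<omega> \<eta>. \<omega> \<in> bimod_center A la ra \<Longrightarrow> \<eta> \<in> bimod_center A la ra
                        \<Longrightarrow> \<sigma> (tp \<omega> \<eta>) = tp \<eta> \<omega>"
    and s12_add: "\<And>u v. \<sigma>12 (u + v) = \<sigma>12 u + \<sigma>12 v"
    and s12_def: "\<And>t z. \<sigma>12 (tpL t z) = tpL (\<sigma> t) z"
    and s23_add: "\<And>u v. \<sigma>23 (u + v) = \<sigma>23 u + \<sigma>23 v"
    and s23_def: "\<And>x t. \<sigma>23 (tpR x t) = tpR x (\<sigma> t)"
  shows "bimod_iso_on A la3 ra3 la3 ra3 (range (half_sum sc la3 \<sigma>23)) (range (half_sum sc la3 \<sigma>12))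
           (half_sum sc la3 \<sigma>12)
       \<and> bimod_iso_on A la3 ra3 la3 ra3 (range (half_sum sc la3 \<sigma>12)) (range (half_sum sc la3 \<sigma>23))
           (half_sum sc la3 \<sigma>23)"
proof -
  interpret canonical_flip sc st A la ra la2 ra2 tp la3 ra3 tpL tpR \<sigma> \<sigma>12 \<sigma>23
    by unfold_locales (fact assms)+
  show ?thesis
    using half_sum_sigma12_iso half_sum_sigma23_iso ..
qed

end
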